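(* There exist constants $C,K>0$ such that for all $x\in\mathbb Z_{\ge0}$, all integers $N\ge n\ge0$ and all $a\ge0$, $$\sum_{y\ge0}\mathfrak p^N_n(x,y)\,e^{ay}=\mathbf E^N_x[e^{aS_n}]\le C\,e^{ax+Ka^2n}.$$
   Context: Let $p_n(z)$ be the probability that simple symmetric random walk on $\mathbb Z$ started at $0$ is at $z$ at time $n$. For $x,y\in\mathbb Z_{\ge0}$ set $p^{(1/2)}_n(x,y)=p_n(x-y)-p_n(x+y+2)$, $\psi(x;n)=\sum_{y\ge0}p^{(1/2)}_n(x,y)$, and for $0\le n\le N$, $\mathfrak p^N_n(x,y)=p^{(1/2)}_n(x,y)\,\psi(y;N-n)/\psi(x;N)$. $\mathbf P^N_x$ is the uniform probability measure on paths $(s_0,\dots,s_N)\in\mathbb Z_{\ge0}^{N+1}$ with $s_0=x$ and $|s_{i+1}-s_i|=1$; $S$ is its coordinate process and $\mathbf E^N_x$ its expectation (so that $\mathbf P^N_x(S_n=y)=\mathfrak p^N_n(x,y)$). *)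

theory Defs
  imports "HOL-Probability.Probability"
begin

definition srw_p :: "nat \<Rightarrow> int \<Rightarrow> real" where
  "srw_p n z = (if \<bar>z\<bar> \<le> int n \<and> even (int n + z)
                then real (n choose nat ((int n + z) div 2)) / 2 ^ n else 0)"

text \<open>Killed (at -1) transition kernel p^(1/2)_n(x,y) = p_n(x-y) - p_n(x+y+2).\<close>
definition p_half :: "nat \<Rightarrow> nat \<Rightarrow> nat \<Rightarrow> real" where
  "p_half n x y = srw_p n (int x - int y) - srw_p n (int x + int y + 2)"

definition psi :: "nat \<Rightarrow> nat \<Rightarrow> real" where
  "psi x n = (\<Sum>y. p_half n x y)"

definition meander_p :: "nat \<Rightarrow> nat \<Rightarrow> nat \<Rightarrow> nat \<Rightarrow> real" where
  "meander_p N n x y = p_half n x y * psi y (N - n) / psi x N"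

definition paths :: "nat \<Rightarrow> nat \<Rightarrow> nat list set" where
  "paths N x = {s. length s = Suc N \<and> s ! 0 = x \<and>
                   (\<forall>i<N. \<bar>int (s ! Suc i) - int (s ! i)\<bar> = 1)}"

definition path_measure :: "nat \<Rightarrow> nat \<Rightarrow> nat list pmf" where
  "path_measure N x = pmf_of_set (paths N x)"

end

theory Submission
  imports Defs
begin

text \<open>Counting paths gives \<open>P\<^sup>N\<^sub>x(S\<^sub>n = y) = p\<^sub>n(x,y) \<psi>(y; N-n) / \<psi>(x; N)\<close> with the killed kernel
  \<open>p\<^sub>n = p\<^sup>(\<^sup>1\<^sup>/\<^sup>2\<^sup>)\<^sub>n\<close>; this is the equality. For the bound, apply Chebyshev's sum inequality
  under the weights \<open>p\<^sub>n(x,y) \<psi>(y; N-n)\<close> to the increasing functions \<open>exp (a y)\<close> and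
  \<open>(y+1) / \<psi>(y; N-n)\<close> (increasing by unimodality of the free walk). This trades the
  conditioning for the function \<open>y+1\<close>, harmonic for the walk killed at \<open>-1\<close>, whose killed
  expectation is \<open>x+1\<close>. The killed expectation of \<open>(y+1) exp (a y)\<close> is, by odd reflection,
  \<open>exp (-a)\<close> times the free expectation of \<open>u exp (a |u|)\<close> at \<open>u = x+1+S\<^sub>n\<close>; symmetrising in
  \<open>S\<^sub>n\<close> bounds it by \<open>(x+1) exp (a x) E exp (2a |S\<^sub>n|) \<le> 2 (x+1) exp (a x + 2 a\<^sup>2 n)\<close>,
  since \<open>cosh b \<le> exp (b\<^sup>2/2)\<close>.\<close>

section \<open>Free simple random walk\<close>

lemma srw_p_altdef:
  "srw_p n z = (if even (int n + z) \<and> - int n \<le> z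
                then real (n choose nat ((int n + z) div 2)) / 2 ^ n else 0)"
proof (cases "z \<le> int n")
  case False
  have "nat ((int n + z) div 2) > n" if even: "even (int n + z)"
  proof -
    obtain m where "int n + z = 2 * m"
      using even by (meson evenE)
    then show ?thesis
      using False by simp
  qed
  then show ?thesis
    using False by (auto simp: srw_p_def)
qed (auto simp: srw_p_def abs_le_iff)

lemma srw_p_0: "srw_p 0 z = (if z = 0 then 1 else 0)"
  by (auto simp: srw_p_def)

lemma srw_p_Suc: "srw_p (Suc n) z = (srw_p n (z - 1) + srw_p n (z + 1)) / 2"
proof (cases "even (int n + 1 + z) \<and> - int n - 1 \<le> z")
  case True
  define k where "k = nat ((int n + 1 + z) div 2)"
  have k: "int n + 1 + z = 2 * int k"
    using True unfolding k_def by (auto elim!: evenE)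
  have Suc_n: "srw_p (Suc n) z = real (Suc n choose k) / 2 ^ Suc n"
    using True by (simp add: srw_p_altdef k_def add.commute add.left_commute)
  have plus: "srw_p n (z + 1) = real (n choose k) / 2 ^ n"
  proof -
    have "int n + (z + 1) = 2 * int k"
      using k by simp
    then show ?thesis
      by (simp add: srw_p_altdef)
  qed
  show ?thesis
  proof (cases k)
    case 0
    then have "srw_p n (z - 1) = 0"
      using k by (simp add: srw_p_altdef)
    then show ?thesis
      using Suc_n plus 0 by simp
  next
    case (Suc j)
    have "int n + (z - 1) = 2 * int j"
      using k Suc by simp
    then have minus: "srw_p n (z - 1) = real (n choose j) / 2 ^ n"
      by (simp add: srw_p_altdef)
    have "srw_p (Suc n) z = (real (n choose j) + real (n choose k)) / 2 ^ Suc n"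
      using Suc_n Suc by simp
    also have "\<dots> = (real (n choose j) / 2 ^ n + real (n choose k) / 2 ^ n) / 2"
      by (simp add: field_simps)
    finally show ?thesis
      using minus plus by simp
  qed
next
  case False
  then show ?thesis
    by (auto simp: srw_p_altdef add.commute add.left_commute)
qed

lemma srw_p_eq_0: "int n < \<bar>z\<bar> \<Longrightarrow> srw_p n z = 0"
  by (auto simp: srw_p_def)

lemma srw_p_nonneg: "0 \<le> srw_p n z"
  by (auto simp: srw_p_def)

lemma srw_p_uminus: "srw_p n (- z) = srw_p n z"
proof (induction n arbitrary: z)
  case (Suc n)
  then show ?case
    using Suc.IH[of "z + 1"] Suc.IH[of "z - 1"] by (simp add: srw_p_Suc)
qed (simp add: srw_p_0)

lemma srw_p_add_2_le: "- 1 \<le> j \<Longrightarrow> srw_p n (j + 2) \<le> srw_p n j"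
proof (induction n arbitrary: j)
  case (Suc n)
  show ?case
  proof (cases "j = - 1")
    case True
    then show ?thesis
      using srw_p_uminus[of "Suc n" 1] by simp
  next
    case False
    have "srw_p n (j + 3) \<le> srw_p n (j + 1)" "srw_p n (j + 1) \<le> srw_p n (j - 1)"
      using Suc.IH[of "j + 1"] Suc.IH[of "j - 1"] Suc.prems False by (simp_all add: add_ac)
    then show ?thesis
      by (simp add: srw_p_Suc algebra_simps)
  qed
qed (simp add: srw_p_0)

lemma srw_p_add_even_le: "0 \<le> j \<Longrightarrow> srw_p n (j + 2 * int t) \<le> srw_p n j"
proof (induction t)
  case (Suc t)
  have "srw_p n (j + 2 * int (Suc t)) = srw_p n ((j + 2 * int t) + 2)"
    by (simp add: algebra_simps)
  also have "\<dots> \<le> srw_p n (j + 2 * int t)"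
    by (rule srw_p_add_2_le) (use Suc.prems in simp)
  finally show ?case
    using Suc by simp
qed simp

definition srw_expect :: "nat \<Rightarrow> (int \<Rightarrow> real) \<Rightarrow> real" where
  "srw_expect n f = (\<Sum>z = - int n..int n. srw_p n z * f z)"

lemma srw_expect_superset:
  assumes "{- int n..int n} \<subseteq> S" "finite S"
  shows "srw_expect n f = (\<Sum>z\<in>S. srw_p n z * f z)"
  unfolding srw_expect_def
  by (rule sum.mono_neutral_left) (use assms in \<open>auto simp: srw_p_eq_0\<close>)

lemma srw_expect_0: "srw_expect 0 f = f 0"
  by (simp add: srw_expect_def srw_p_0)

lemma srw_expect_add: "srw_expect n (\<lambda>z. f z + g z) = srw_expect n f + srw_expect n g"
  unfolding srw_expect_def by (simp add: algebra_simps sum.distrib)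

lemma srw_expect_cmult: "srw_expect n (\<lambda>z. c * f z) = c * srw_expect n f"
  unfolding srw_expect_def by (simp add: algebra_simps sum_distrib_left)

lemma srw_expect_midpoint:
  "srw_expect n (\<lambda>z. (f z + g z) / 2) = (srw_expect n f + srw_expect n g) / 2"
  unfolding srw_expect_def sum_divide_distrib sum.distrib[symmetric]
  by (rule sum.cong) (simp_all add: field_simps)

lemma srw_expect_mono: "(\<And>z. f z \<le> g z) \<Longrightarrow> srw_expect n f \<le> srw_expect n g"
  unfolding srw_expect_def by (intro sum_mono mult_left_mono) (auto simp: srw_p_nonneg)

lemma srw_expect_reflect: "srw_expect n (\<lambda>z. f (- z)) = srw_expect n f"
  unfolding srw_expect_def
  by (rule sum.reindex_bij_witness[of _ uminus uminus]) (auto simp: srw_p_uminus)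

lemma srw_expect_Suc:
  "srw_expect (Suc n) f = srw_expect n (\<lambda>z. (f (z + 1) + f (z - 1)) / 2)"
proof -
  let ?I = "{- int n - 2..int n + 2}"
  have shift: "(\<Sum>z\<in>?I. srw_p n (z - c) * f z) = srw_expect n (\<lambda>z. f (z + c))"
    if "\<bar>c\<bar> = 1" for c
  proof -
    have "(\<Sum>z\<in>?I. srw_p n (z - c) * f z) = (\<Sum>w\<in>{- int n - 2 - c..int n + 2 - c}. srw_p n w * f (w + c))"
      by (rule sum.reindex_bij_witness[of _ "\<lambda>w. w + c" "\<lambda>z. z - c"]) auto
    also have "\<dots> = srw_expect n (\<lambda>z. f (z + c))"
      using that by (intro srw_expect_superset[symmetric]) auto
    finally show ?thesis .
  qed
  have "srw_expect (Suc n) f = (\<Sum>z\<in>?I. srw_p (Suc n) z * f z)"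
    by (rule srw_expect_superset) auto
  also have "\<dots> = (\<Sum>z\<in>?I. srw_p n (z - 1) * f z) / 2 + (\<Sum>z\<in>?I. srw_p n (z - (- 1)) * f z) / 2"
    unfolding srw_p_Suc sum_divide_distrib sum.distrib[symmetric]
    by (rule sum.cong) (simp_all add: field_simps)
  also have "\<dots> = (srw_expect n (\<lambda>z. f (z + 1)) + srw_expect n (\<lambda>z. f (z - 1))) / 2"
    using shift[of 1] shift[of "- 1"] by (simp add: add_divide_distrib)
  also have "\<dots> = srw_expect n (\<lambda>z. (f (z + 1) + f (z - 1)) / 2)"
    by (rule srw_expect_midpoint[symmetric])
  finally show ?thesis .
qed

lemma srw_expect_exp: "srw_expect n (\<lambda>z. exp (b * of_int z)) = cosh b ^ n"
proof (induction n)
  case (Suc n)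
  have "srw_expect (Suc n) (\<lambda>z. exp (b * of_int z)) = srw_expect n (\<lambda>z. cosh b * exp (b * of_int z))"
    unfolding srw_expect_Suc
    by (rule arg_cong[where f = "srw_expect n"])
      (auto simp: cosh_field_def algebra_simps exp_add exp_diff exp_minus field_simps)
  then show ?case
    using Suc by (simp add: srw_expect_cmult)
qed (simp add: srw_expect_0)

lemma cosh_le_exp_square_half: "cosh (b::real) \<le> exp (b\<^sup>2 / 2)"
proof -
  \<comment> \<open>Hoeffding's lemma for a fair coin with values \<open>0\<close> and \<open>2 |b|\<close>\<close>
  have "- (2 * \<bar>b\<bar>) * (1/2) + ln (1 + (1/2) * (exp (2 * \<bar>b\<bar>) - 1)) \<le> (2 * \<bar>b\<bar>)\<^sup>2 / 8"
    by (rule Hoeffdings_lemma_aux) auto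
  moreover have "1 + (1/2) * (exp (2 * \<bar>b\<bar>) - 1) = exp \<bar>b\<bar> * cosh \<bar>b\<bar>"
    by (simp add: cosh_field_def field_simps exp_minus flip: exp_add)
  ultimately have "ln (cosh \<bar>b\<bar>) \<le> \<bar>b\<bar>\<^sup>2 / 2"
    by (simp add: ln_mult power2_eq_square)
  then have "cosh \<bar>b\<bar> \<le> exp (\<bar>b\<bar>\<^sup>2 / 2)"
    by (metis cosh_real_pos exp_le_cancel_iff exp_ln)
  then show ?thesis
    by simp
qed

lemma srw_expect_exp_abs_le:
  assumes "0 \<le> b"
  shows "srw_expect n (\<lambda>z. exp (b * \<bar>of_int z\<bar>)) \<le> 2 * exp (b\<^sup>2 / 2 * n)"
proof -
  have "srw_expect n (\<lambda>z. exp (b * \<bar>of_int z\<bar>))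
        \<le> srw_expect n (\<lambda>z. exp (b * of_int z) + exp ((- b) * of_int z))"
    by (rule srw_expect_mono) (auto simp: abs_if)
  also have "\<dots> = 2 * cosh b ^ n"
    using srw_expect_exp[of n b] srw_expect_exp[of n "- b"] by (simp add: srw_expect_add)
  also have "\<dots> \<le> 2 * exp (b\<^sup>2 / 2) ^ n"
    by (intro mult_left_mono power_mono cosh_le_exp_square_half) auto
  finally show ?thesis
    by (simp add: mult.commute flip: exp_of_nat_mult)
qed

section \<open>The walk killed at \<open>-1\<close>\<close>

text \<open>The kernel \<open>p_half\<close> with integer arguments, so that the absorbing site \<open>-1\<close> is allowed as a
  starting point.\<close>
definition killed_p :: "nat \<Rightarrow> int \<Rightarrow> int \<Rightarrow> real" where
  "killed_p n x y = srw_p n (x - y) - srw_p n (x + y + 2)"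

definition killed_expect :: "nat \<Rightarrow> int \<Rightarrow> (nat \<Rightarrow> real) \<Rightarrow> real" where
  "killed_expect n x h = (\<Sum>y < nat x + n + 1. killed_p n x (int y) * h y)"

lemma p_half_eq_killed_p: "p_half n x y = killed_p n (int x) (int y)"
  by (simp add: p_half_def killed_p_def)

lemma killed_p_Suc: "killed_p (Suc n) x y = (killed_p n (x + 1) y + killed_p n (x - 1) y) / 2"
  unfolding killed_p_def srw_p_Suc by (simp add: algebra_simps diff_divide_distrib)

lemma killed_p_minus_one: "killed_p n (- 1) y = 0"
  unfolding killed_p_def using srw_p_uminus[of n "y + 1"] by (simp add: algebra_simps)

lemma killed_p_0: "0 \<le> x \<Longrightarrow> 0 \<le> y \<Longrightarrow> killed_p 0 x y = (if x = y then 1 else 0)"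
  by (simp add: killed_p_def srw_p_0)

lemma killed_p_eq_0: "0 \<le> y \<Longrightarrow> - 1 \<le> x \<Longrightarrow> x + int n < y \<Longrightarrow> killed_p n x y = 0"
  by (simp add: killed_p_def srw_p_eq_0)

lemma killed_p_nonneg:
  assumes "0 \<le> x" "0 \<le> y"
  shows "0 \<le> killed_p n x y"
proof -
  have "x + y + 2 = \<bar>x - y\<bar> + 2 * int (nat (min x y + 1))"
    using assms by (simp add: abs_if min_def)
  then have "srw_p n (x + y + 2) \<le> srw_p n \<bar>x - y\<bar>"
    by (simp only: srw_p_add_even_le abs_ge_zero)
  also have "srw_p n \<bar>x - y\<bar> = srw_p n (x - y)"
    using srw_p_uminus[of n "x - y"] by (simp add: abs_if)
  finally show ?thesis
    by (simp add: killed_p_def)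
qed

lemma killed_expect_superset:
  assumes "nat x + n + 1 \<le> B" "- 1 \<le> x"
  shows "killed_expect n x h = (\<Sum>y<B. killed_p n x (int y) * h y)"
  unfolding killed_expect_def
  by (rule sum.mono_neutral_left) (use assms in \<open>auto simp: killed_p_eq_0\<close>)

lemma killed_expect_minus_one: "killed_expect n (- 1) h = 0"
  by (simp add: killed_expect_def killed_p_minus_one)

lemma killed_expect_0:
  assumes "0 \<le> x"
  shows "killed_expect 0 x h = h (nat x)"
proof -
  have "killed_expect 0 x h = (\<Sum>y<nat x + 1. if y = nat x then h y else 0)"
    unfolding killed_expect_def using assms by (intro sum.cong) (auto simp: killed_p_0)
  then show ?thesis
    by simp
qed

lemma killed_expect_Suc:
  assumes "0 \<le> x"
  shows "killed_expect (Suc n) x h = (killed_expect n (x + 1) h + killed_expect n (x - 1) h) / 2"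
proof -
  define B where "B = nat x + n + 2"
  have "killed_expect (Suc n) x h = (\<Sum>y<B. killed_p (Suc n) x (int y) * h y)"
    "killed_expect n (x + 1) h = (\<Sum>y<B. killed_p n (x + 1) (int y) * h y)"
    "killed_expect n (x - 1) h = (\<Sum>y<B. killed_p n (x - 1) (int y) * h y)"
    by (rule killed_expect_superset; use assms in \<open>simp add: B_def\<close>)+
  then show ?thesis
    by (simp add: killed_p_Suc add_divide_distrib sum_divide_distrib sum.distrib algebra_simps)
qed

lemma killed_expect_eq_solution:
  assumes heat: "\<And>n x. 0 \<le> x \<Longrightarrow> G (Suc n) x = (G n (x + 1) + G n (x - 1)) / 2"
    and boundary: "\<And>n. G n (- 1) = 0"
    and initial: "\<And>x. 0 \<le> x \<Longrightarrow> G 0 x = h (nat x)"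
    and "- 1 \<le> x"
  shows "killed_expect n x h = G n x"
  using \<open>- 1 \<le> x\<close>
proof (induction n arbitrary: x)
  case 0
  then show ?case
    by (cases "x = - 1") (auto simp: killed_expect_minus_one boundary killed_expect_0 initial)
next
  case (Suc n)
  then consider "x = - 1" | "0 \<le> x"
    by linarith
  then show ?case
  proof cases
    case 2
    then show ?thesis
      using Suc.IH[of "x + 1"] Suc.IH[of "x - 1"] by (simp add: killed_expect_Suc heat)
  qed (simp add: killed_expect_minus_one boundary)
qed

lemma killed_expect_linear: "- 1 \<le> x \<Longrightarrow> killed_expect n x (\<lambda>y. real y + 1) = of_int x + 1"
  by (rule killed_expect_eq_solution) (auto simp: field_simps)

section \<open>Survival function\<close>

lemma psi_eq_killed_expect: "psi y m = killed_expect m (int y) (\<lambda>_. 1)"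
proof -
  have "psi y m = (\<Sum>i<y + m + 1. p_half m y i)"
    unfolding psi_def by (rule suminf_finite) (auto simp: p_half_eq_killed_p intro!: killed_p_eq_0)
  then show ?thesis
    by (simp add: killed_expect_def p_half_eq_killed_p)
qed

lemma psi_0: "psi x 0 = 1"
  by (simp add: psi_eq_killed_expect killed_expect_0)

lemma psi_Suc: "psi x (Suc N) = (psi (Suc x) N + (if x = 0 then 0 else psi (x - 1) N)) / 2"
  by (simp add: psi_eq_killed_expect killed_expect_Suc killed_expect_minus_one of_nat_diff add.commute)

definition srw_p_pair :: "nat \<Rightarrow> int \<Rightarrow> real" where
  "srw_p_pair m i = srw_p m i + srw_p m (i + 1)"

lemma srw_p_pair_Suc: "srw_p_pair (Suc m) i = (srw_p_pair m (i - 1) + srw_p_pair m (i + 1)) / 2"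
  unfolding srw_p_pair_def srw_p_Suc by (simp add: algebra_simps add_divide_distrib)

lemma srw_p_pair_minus_one: "srw_p_pair m (- 1) = srw_p_pair m 0"
  unfolding srw_p_pair_def using srw_p_uminus[of m 1] by simp

lemma srw_p_pair_nonneg: "0 \<le> srw_p_pair m i"
  by (simp add: srw_p_pair_def srw_p_nonneg)

lemma srw_p_pair_0_pos: "0 < srw_p_pair m 0"
proof (induction m)
  case (Suc m)
  have "srw_p_pair (Suc m) 0 = srw_p m 1 + (srw_p m 0 + srw_p m 2) / 2"
    unfolding srw_p_pair_def srw_p_Suc using srw_p_uminus[of m 1] by simp
  then show ?case
    using Suc srw_p_nonneg[of m 1] srw_p_nonneg[of m 2] by (simp add: srw_p_pair_def) argo
qed (simp add: srw_p_pair_def srw_p_0)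

lemma srw_p_pair_antimono:
  assumes "i \<le> j"
  shows "srw_p_pair m (int j) \<le> srw_p_pair m (int i)"
proof -
  have "srw_p_pair m (int (Suc k)) \<le> srw_p_pair m (int k)" for k
    using srw_p_add_2_le[of "int k" m] srw_p_add_2_le[of "int k + 1" m]
    by (simp add: srw_p_pair_def algebra_simps)
  then show ?thesis
    using lift_Suc_antimono_le[of "\<lambda>i. srw_p_pair m (int i)"] assms by blast
qed

lemma sum_srw_p_pair_Suc:
  "(\<Sum>i<Suc k. srw_p_pair (Suc m) (int i))
     = ((\<Sum>i<Suc (Suc k). srw_p_pair m (int i)) + (\<Sum>i<k. srw_p_pair m (int i))) / 2"
proof -
  have "(\<Sum>i<Suc k. srw_p_pair (Suc m) (int i))
      = (\<Sum>i<Suc k. srw_p_pair m (int i - 1)) / 2 + (\<Sum>i<Suc k. srw_p_pair m (int i + 1)) / 2"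
    by (simp only: srw_p_pair_Suc add_divide_distrib sum.distrib sum_divide_distrib)
  moreover have "(\<Sum>i<Suc k. srw_p_pair m (int i - 1)) = srw_p_pair m 0 + (\<Sum>i<k. srw_p_pair m (int i))"
    by (subst sum.lessThan_Suc_shift) (simp add: srw_p_pair_minus_one)
  moreover have "(\<Sum>i<Suc (Suc k). srw_p_pair m (int i)) = srw_p_pair m 0 + (\<Sum>i<Suc k. srw_p_pair m (int i + 1))"
    by (subst sum.lessThan_Suc_shift) (simp add: add.commute)
  ultimately show ?thesis
    by argo
qed

lemma psi_eq_sum_srw_p_pair: "psi y m = (\<Sum>i\<le>y. srw_p_pair m (int i))"
proof -
  have "killed_expect m (int y) (\<lambda>_. 1) = (\<Sum>i<nat (int y + 1). srw_p_pair m (int i))"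
  proof (rule killed_expect_eq_solution[where G = "\<lambda>m x. \<Sum>i<nat (x + 1). srw_p_pair m (int i)"])
    fix n and x :: int
    assume "0 \<le> x"
    then obtain k where "x = int k"
      by (metis nonneg_eq_int)
    then show "(\<Sum>i<nat (x + 1). srw_p_pair (Suc n) (int i))
      = ((\<Sum>i<nat (x + 1 + 1). srw_p_pair n (int i)) + (\<Sum>i<nat (x - 1 + 1). srw_p_pair n (int i))) / 2"
      using sum_srw_p_pair_Suc[where k = k and m = n] by (simp add: nat_add_distrib)
  qed (auto simp: srw_p_pair_def srw_p_0 lessThan_nat_numeral)
  moreover have "nat (int y + 1) = Suc y"
    by (simp add: nat_add_distrib)
  ultimately show ?thesis
    by (simp add: psi_eq_killed_expect lessThan_Suc_atMost)
qed

lemma psi_pos: "0 < psi y m"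
proof -
  have "srw_p_pair m (int 0) \<le> psi y m"
    unfolding psi_eq_sum_srw_p_pair by (rule member_le_sum) (auto simp: srw_p_pair_nonneg)
  then show ?thesis
    using srw_p_pair_0_pos[of m] by simp
qed

lemma psi_Suc_le: "(real y + 1) * psi (Suc y) m \<le> (real y + 2) * psi y m"
proof -
  have "real (card {..y}) * srw_p_pair m (int (Suc y)) \<le> psi y m"
    unfolding psi_eq_sum_srw_p_pair
    by (rule sum_bounded_below) (use srw_p_pair_antimono[of _ "Suc y" m] in auto)
  then show ?thesis
    by (simp add: psi_eq_sum_srw_p_pair algebra_simps)
qed

lemma psi_ratio_mono:
  assumes "y \<le> z"
  shows "(real y + 1) / psi y m \<le> (real z + 1) / psi z m"
proof -
  have "(real k + 1) / psi k m \<le> (real (Suc k) + 1) / psi (Suc k) m" for k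
    using psi_Suc_le[of k m] psi_pos[of k m] psi_pos[of "Suc k" m]
    by (simp add: divide_simps algebra_simps)
  then show ?thesis
    using lift_Suc_mono_le[of "\<lambda>y. (real y + 1) / psi y m"] assms by blast
qed

section \<open>Odd reflection\<close>

definition odd_exp :: "real \<Rightarrow> real \<Rightarrow> real" where
  "odd_exp a u = u * exp (a * \<bar>u\<bar>)"

lemma odd_exp_uminus: "odd_exp a (- u) = - odd_exp a u"
  by (simp add: odd_exp_def)

lemma odd_exp_sum_le_nonneg:
  assumes "0 < c" "0 \<le> a" "0 \<le> z"
  shows "odd_exp a (c + z) + odd_exp a (c - z) \<le> 2 * c * exp (a * c) * exp (2 * a * z)"
proof (cases "z \<le> c")
  case True
  have "odd_exp a (c + z) + odd_exp a (c - z)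
      = exp (a * c) * ((c + z) * exp (a * z) + (c - z) * exp (- (a * z)))"
    using True assms by (simp add: odd_exp_def algebra_simps flip: exp_add)
  also have "\<dots> \<le> exp (a * c) * ((c + z) * exp (a * z) + (c - z) * exp (a * z))"
    using True assms by (intro mult_left_mono add_left_mono mult_left_mono) auto
  also have "\<dots> \<le> 2 * c * exp (a * c) * exp (2 * a * z)"
    using assms by (simp add: algebra_simps mult_left_mono)
  finally show ?thesis .
next
  case False
  have "exp (- (2 * a * c)) \<ge> 1 - 2 * a * c"
    using exp_ge_add_one_self[of "- (2 * a * c)"] by simp
  then have "exp (a * c) * (1 - 2 * a * c) \<le> exp (a * c) * exp (- (2 * a * c))"
    by (rule mult_left_mono) simp
  also have "\<dots> = exp (- (a * c))"
    by (simp flip: exp_add)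
  finally have sinh_le: "exp (a * c) - exp (- (a * c)) \<le> 2 * a * c * exp (a * c)"
    by (simp add: algebra_simps)
  have "odd_exp a (c + z) + odd_exp a (c - z)
      = exp (a * z) * (c * (exp (a * c) + exp (- (a * c))) + z * (exp (a * c) - exp (- (a * c))))"
    using False assms by (simp add: odd_exp_def algebra_simps flip: exp_add)
  also have "\<dots> \<le> exp (a * z) * (c * (2 * exp (a * c)) + z * (2 * a * c * exp (a * c)))"
    using assms sinh_le by (intro mult_left_mono add_mono) auto
  also have "\<dots> = 2 * c * exp (a * c) * (exp (a * z) * (1 + a * z))"
    by (simp add: algebra_simps)
  also have "\<dots> \<le> 2 * c * exp (a * c) * (exp (a * z) * exp (a * z))"
    using assms exp_ge_add_one_self[of "a * z"] by (intro mult_left_mono) auto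
  also have "\<dots> = 2 * c * exp (a * c) * exp (2 * a * z)"
    by (simp flip: exp_add)
  finally show ?thesis .
qed

lemma odd_exp_sum_le:
  assumes "0 < c" "0 \<le> a"
  shows "odd_exp a (c + z) + odd_exp a (c - z) \<le> 2 * c * exp (a * c) * exp (2 * a * \<bar>z\<bar>)"
proof (cases "0 \<le> z")
  case False
  then show ?thesis
    using odd_exp_sum_le_nonneg[OF assms, of "- z"] by (simp add: add.commute)
qed (use odd_exp_sum_le_nonneg[OF assms] in simp)

lemma srw_expect_odd_exp_le:
  assumes "0 < c" "0 \<le> a"
  shows "srw_expect n (\<lambda>z. odd_exp a (c + of_int z)) \<le> 2 * c * exp (a * c) * exp (2 * a\<^sup>2 * n)"
proof -
  define g where "g = (\<lambda>z::int. odd_exp a (c + of_int z))"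
  have "srw_expect n g = (srw_expect n g + srw_expect n (\<lambda>z. g (- z))) / 2"
    by (simp add: srw_expect_reflect)
  also have "\<dots> = srw_expect n (\<lambda>z. (g z + g (- z)) / 2)"
    by (rule srw_expect_midpoint[symmetric])
  also have "\<dots> \<le> srw_expect n (\<lambda>z. c * exp (a * c) * exp ((2 * a) * \<bar>of_int z\<bar>))"
  proof (rule srw_expect_mono)
    fix z
    show "(g z + g (- z)) / 2 \<le> c * exp (a * c) * exp ((2 * a) * \<bar>of_int z\<bar>)"
      using odd_exp_sum_le[OF assms, of "of_int z"] by (simp add: g_def)
  qed
  also have "\<dots> \<le> c * exp (a * c) * (2 * exp ((2 * a)\<^sup>2 / 2 * n))"
    unfolding srw_expect_cmult
    using assms by (intro mult_left_mono srw_expect_exp_abs_le) auto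
  also have "\<dots> = 2 * c * exp (a * c) * exp (2 * a\<^sup>2 * n)"
    by (simp add: power2_eq_square)
  finally show ?thesis
    by (simp add: g_def)
qed

text \<open>Odd reflection: as \<open>odd_exp a\<close> is odd, its expectation under the free walk from \<open>x + 1\<close>
  vanishes at the boundary \<open>x = -1\<close> and so equals the killed expectation.\<close>
lemma killed_expect_linear_exp:
  assumes "- 1 \<le> x"
  shows "killed_expect n x (\<lambda>y. (real y + 1) * exp (a * real y))
           = exp (- a) * srw_expect n (\<lambda>z. odd_exp a (of_int (x + 1 + z)))"
proof (rule killed_expect_eq_solution[OF _ _ _ assms])
  fix n and x :: int
  show "exp (- a) * srw_expect (Suc n) (\<lambda>z. odd_exp a (of_int (x + 1 + z)))
      = (exp (- a) * srw_expect n (\<lambda>z. odd_exp a (of_int (x + 1 + 1 + z)))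
         + exp (- a) * srw_expect n (\<lambda>z. odd_exp a (of_int (x - 1 + 1 + z)))) / 2"
    unfolding srw_expect_Suc srw_expect_midpoint by (simp add: algebra_simps add_divide_distrib)
next
  fix n
  let ?f = "\<lambda>z::int. odd_exp a (of_int z)"
  have "srw_expect n ?f = srw_expect n (\<lambda>z. - ?f z)"
    by (subst srw_expect_reflect[symmetric]) (simp add: odd_exp_uminus)
  then have "srw_expect n ?f = 0"
    using srw_expect_cmult[of n "- 1" ?f] by simp
  then show "exp (- a) * srw_expect n (\<lambda>z. odd_exp a (of_int (- 1 + 1 + z))) = 0"
    by simp
next
  fix x :: int
  assume "0 \<le> x"
  then show "exp (- a) * srw_expect 0 (\<lambda>z. odd_exp a (of_int (x + 1 + z)))
      = (real (nat x) + 1) * exp (a * real (nat x))"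
    by (simp add: srw_expect_0 odd_exp_def algebra_simps flip: exp_add)
qed

lemma killed_expect_linear_exp_le:
  assumes "0 \<le> a" "0 \<le> x"
  shows "killed_expect n x (\<lambda>y. (real y + 1) * exp (a * real y))
           \<le> 2 * (of_int x + 1) * exp (a * of_int x) * exp (2 * a\<^sup>2 * n)"
proof -
  have "srw_expect n (\<lambda>z. odd_exp a (of_int (x + 1 + z)))
      \<le> 2 * (of_int x + 1) * exp (a * (of_int x + 1)) * exp (2 * a\<^sup>2 * n)"
    using srw_expect_odd_exp_le[of "of_int (x + 1)" a n] assms by (simp add: add.assoc)
  then have "killed_expect n x (\<lambda>y. (real y + 1) * exp (a * real y))
      \<le> exp (- a) * (2 * (of_int x + 1) * exp (a * (of_int x + 1)) * exp (2 * a\<^sup>2 * n))"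
    using assms by (simp add: killed_expect_linear_exp)
  also have "\<dots> = 2 * (of_int x + 1) * exp (a * of_int x) * exp (2 * a\<^sup>2 * n)"
    by (simp add: algebra_simps flip: exp_add)
  finally show ?thesis .
qed

section \<open>Counting paths\<close>

lemma paths_0: "paths 0 x = {[x]}"
  by (auto simp: paths_def length_Suc_conv)

lemma Cons_mem_paths_Suc:
  "x # t \<in> paths (Suc N) x \<longleftrightarrow> t \<in> paths N (t ! 0) \<and> (t ! 0 = Suc x \<or> x \<noteq> 0 \<and> t ! 0 = x - 1)"
  unfolding paths_def by (auto simp: All_less_Suc2)

lemma paths_Suc:
  "paths (Suc N) x = Cons x ` (paths N (Suc x) \<union> (if x = 0 then {} else paths N (x - 1)))"
proof (intro equalityI subsetI)
  fix s
  assume s: "s \<in> paths (Suc N) x"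
  then obtain t where t: "s = x # t"
    unfolding paths_def by (cases s) auto
  then have "t \<in> paths N (t ! 0)" "t ! 0 = Suc x \<or> x \<noteq> 0 \<and> t ! 0 = x - 1"
    using s Cons_mem_paths_Suc by simp_all
  then have "t \<in> paths N (Suc x) \<or> x \<noteq> 0 \<and> t \<in> paths N (x - 1)"
    by auto
  then show "s \<in> Cons x ` (paths N (Suc x) \<union> (if x = 0 then {} else paths N (x - 1)))"
    using t by auto
next
  fix s
  assume "s \<in> Cons x ` (paths N (Suc x) \<union> (if x = 0 then {} else paths N (x - 1)))"
  then obtain t where "s = x # t" "t \<in> paths N (Suc x) \<or> x \<noteq> 0 \<and> t \<in> paths N (x - 1)"
    by (auto split: if_splits)
  moreover from this(2) have "t \<in> paths N (t ! 0)" "t ! 0 = Suc x \<or> x \<noteq> 0 \<and> t ! 0 = x - 1"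
    by (auto simp: paths_def)
  ultimately show "s \<in> paths (Suc N) x"
    using Cons_mem_paths_Suc by simp
qed

lemma finite_paths: "finite (paths N x)"
  by (induction N arbitrary: x) (auto simp: paths_0 paths_Suc)

lemma paths_nonempty: "paths N x \<noteq> {}"
  by (induction N arbitrary: x) (auto simp: paths_0 paths_Suc)

lemma sum_paths_Suc:
  "(\<Sum>s\<in>paths (Suc N) x. f s)
     = (\<Sum>t\<in>paths N (Suc x). f (x # t)) + (if x = 0 then 0 else (\<Sum>t\<in>paths N (x - 1). f (x # t)))"
proof -
  have "paths N (Suc x) \<inter> paths N (x - 1) = {}"
    by (auto simp: paths_def)
  then show ?thesis
    unfolding paths_Suc by (subst sum.reindex) (auto simp: sum.union_disjoint finite_paths)
qed

lemma card_paths: "real (card (paths N x)) = 2 ^ N * psi x N"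
proof (induction N arbitrary: x)
  case (Suc N)
  have "real (card (paths (Suc N) x)) = (\<Sum>s\<in>paths (Suc N) x. 1)"
    by simp
  also have "\<dots> = real (card (paths N (Suc x))) + (if x = 0 then 0 else real (card (paths N (x - 1))))"
    by (subst sum_paths_Suc) simp
  also have "\<dots> = 2 ^ Suc N * psi x (Suc N)"
    using Suc by (simp add: psi_Suc field_simps)
  finally show ?case .
qed (simp add: paths_0 psi_0)

text \<open>Splitting the path at time \<open>n\<close>: the prefix is a killed walk and the remaining \<open>N - n\<close>
  steps are counted by \<open>\<psi>\<close>.\<close>
lemma sum_paths_nth:
  assumes "n \<le> N"
  shows "(\<Sum>s\<in>paths N x. g (s ! n)) = 2 ^ N * killed_expect n (int x) (\<lambda>y. psi y (N - n) * g y)"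
  using assms
proof (induction N arbitrary: n x)
  case 0
  then show ?case
    by (simp add: paths_0 killed_expect_0 psi_0)
next
  case (Suc N)
  show ?case
  proof (cases n)
    case 0
    have "(\<Sum>s\<in>paths (Suc N) x. g (s ! n)) = real (card (paths (Suc N) x)) * g x"
      using 0 by (simp add: paths_def)
    then show ?thesis
      using 0 by (simp add: card_paths killed_expect_0)
  next
    case (Suc k)
    define h where "h = (\<lambda>y. psi y (N - k) * g y)"
    have "(\<Sum>s\<in>paths (Suc N) x. g (s ! n))
        = (\<Sum>t\<in>paths N (Suc x). g (t ! k)) + (if x = 0 then 0 else (\<Sum>t\<in>paths N (x - 1). g (t ! k)))"
      using Suc by (simp add: sum_paths_Suc)
    also have "\<dots> = 2 ^ N * (killed_expect k (int x + 1) h + killed_expect k (int x - 1) h)"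
      using Suc.IH[of k] Suc.prems Suc by (simp add: h_def of_nat_diff killed_expect_minus_one add.commute distrib_left)
    also have "\<dots> = 2 ^ Suc N * killed_expect n (int x) h"
      using Suc by (simp add: killed_expect_Suc)
    finally show ?thesis
      using Suc by (simp add: h_def)
  qed
qed

lemma psi_eq_killed_expect_psi:
  assumes "n \<le> N"
  shows "psi x N = killed_expect n (int x) (\<lambda>y. psi y (N - n))"
  using sum_paths_nth[OF assms, where x = x and g = "\<lambda>_. 1"] card_paths[of N x] by simp

lemma expectation_path_measure_nth:
  assumes "n \<le> N"
  shows "measure_pmf.expectation (path_measure N x) (\<lambda>s. g (s ! n))
           = killed_expect n (int x) (\<lambda>y. psi y (N - n) * g y) / psi x N"
proof -
  have "measure_pmf.expectation (path_measure N x) (\<lambda>s. g (s ! n))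
      = (\<Sum>s\<in>paths N x. g (s ! n)) / real (card (paths N x))"
    unfolding path_measure_def by (rule integral_pmf_of_set) (auto simp: finite_paths paths_nonempty)
  then show ?thesis
    by (simp add: sum_paths_nth[OF assms] card_paths)
qed

lemma suminf_meander_p:
  "(\<Sum>y. meander_p N n x y * g y) = killed_expect n (int x) (\<lambda>y. psi y (N - n) * g y) / psi x N"
proof -
  have "(\<Sum>y. meander_p N n x y * g y) = (\<Sum>y<x + n + 1. meander_p N n x y * g y)"
    by (rule suminf_finite) (auto simp: meander_p_def p_half_eq_killed_p intro!: killed_p_eq_0)
  also have "\<dots> = (\<Sum>y<x + n + 1. killed_p n (int x) (int y) * (psi y (N - n) * g y)) / psi x N"
    unfolding sum_divide_distrib by (intro sum.cong) (simp_all add: meander_p_def p_half_eq_killed_p)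
  finally show ?thesis
    by (simp add: killed_expect_def)
qed

section \<open>Exponential moments of the meander\<close>

lemma weighted_Chebyshev_sum:
  fixes w f g :: "'a \<Rightarrow> real"
  assumes "\<And>i. i \<in> A \<Longrightarrow> 0 \<le> w i"
    and "\<And>i j. i \<in> A \<Longrightarrow> j \<in> A \<Longrightarrow> 0 \<le> (f i - f j) * (g i - g j)"
  shows "(\<Sum>i\<in>A. w i * f i) * (\<Sum>i\<in>A. w i * g i) \<le> (\<Sum>i\<in>A. w i) * (\<Sum>i\<in>A. w i * f i * g i)"
proof -
  have "0 \<le> (\<Sum>i\<in>A. \<Sum>j\<in>A. w i * w j * ((f i - f j) * (g i - g j)))"
    using assms by (intro sum_nonneg) simp
  also have "\<dots> = (\<Sum>i\<in>A. \<Sum>j\<in>A. (w i * f i * g i) * w j + w i * (w j * f j * g j)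
                    - (w i * f i) * (w j * g j) - (w i * g i) * (w j * f j))"
    by (intro sum.cong refl) (simp add: algebra_simps)
  also have "\<dots> = 2 * ((\<Sum>i\<in>A. w i) * (\<Sum>i\<in>A. w i * f i * g i) - (\<Sum>i\<in>A. w i * f i) * (\<Sum>i\<in>A. w i * g i))"
    by (simp only: sum.distrib sum_subtractf sum_product[symmetric]) (simp add: algebra_simps)
  finally show ?thesis
    by simp
qed

lemma killed_expect_Chebyshev:
  assumes "0 \<le> x" "\<And>y. 0 \<le> w y" "mono f" "mono g"
  shows "killed_expect n x (\<lambda>y. w y * f y) * killed_expect n x (\<lambda>y. w y * g y)
           \<le> killed_expect n x w * killed_expect n x (\<lambda>y. w y * f y * g y)"
proof -
  have "0 \<le> (f i - f j) * (g i - g j)" for i j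
    using assms(3,4) by (cases "i \<le> j") (auto simp: mono_def mult_nonpos_nonpos)
  then show ?thesis
    using weighted_Chebyshev_sum[of "{..<nat x + n + 1}" "\<lambda>y. killed_p n x (int y) * w y" f g] assms(1,2)
    by (simp add: killed_expect_def killed_p_nonneg mult.assoc)
qed

lemma killed_expect_psi_exp_le:
  assumes "0 \<le> a"
  shows "killed_expect n (int x) (\<lambda>y. psi y m * exp (a * real y))
           \<le> 2 * psi x (n + m) * exp (a * real x + 2 * a\<^sup>2 * n)"
proof -
  let ?K = "killed_expect n (int x)"
  have psi_ne: "psi y m \<noteq> 0" for y
    using psi_pos[of y m] by simp
  have "mono (\<lambda>y. exp (a * real y))" "mono (\<lambda>y. (real y + 1) / psi y m)"
    using assms psi_ratio_mono by (auto intro!: monoI mult_left_mono)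
  then have "?K (\<lambda>y. psi y m * exp (a * real y)) * ?K (\<lambda>y. psi y m * ((real y + 1) / psi y m))
      \<le> ?K (\<lambda>y. psi y m) * ?K (\<lambda>y. psi y m * exp (a * real y) * ((real y + 1) / psi y m))"
    using psi_pos less_imp_le by (intro killed_expect_Chebyshev) auto
  also have "?K (\<lambda>y. psi y m * exp (a * real y) * ((real y + 1) / psi y m))
      = ?K (\<lambda>y. (real y + 1) * exp (a * real y))"
    by (simp add: psi_ne mult.commute)
  also have "?K (\<lambda>y. psi y m) = psi x (n + m)"
    using psi_eq_killed_expect_psi[of n "n + m" x] by simp
  finally have "?K (\<lambda>y. psi y m * exp (a * real y)) * (real x + 1)
      \<le> psi x (n + m) * ?K (\<lambda>y. (real y + 1) * exp (a * real y))"
    by (simp add: psi_ne killed_expect_linear)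
  also have "\<dots> \<le> psi x (n + m) * (2 * (real x + 1) * exp (a * real x) * exp (2 * a\<^sup>2 * n))"
    using killed_expect_linear_exp_le[OF assms, of "int x" n] psi_pos[of x "n + m"]
    by (intro mult_left_mono) auto
  finally have "?K (\<lambda>y. psi y m * exp (a * real y)) * (real x + 1)
      \<le> (2 * psi x (n + m) * exp (a * real x + 2 * a\<^sup>2 * n)) * (real x + 1)"
    by (simp add: exp_add algebra_simps)
  then show ?thesis
    by (rule mult_right_le_imp_le) simp
qed

theorem proposition3p7:
  shows "\<exists>C>0. \<exists>K>0. \<forall>(x::nat) (N::nat) (n::nat) (a::real). n \<le> N \<longrightarrow> 0 \<le> a \<longrightarrow>
           (\<Sum>y. meander_p N n x y * exp (a * real y))
             = measure_pmf.expectation (path_measure N x) (\<lambda>s. exp (a * real (s ! n)))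
         \<and> measure_pmf.expectation (path_measure N x) (\<lambda>s. exp (a * real (s ! n)))
             \<le> C * exp (a * real x + K * a\<^sup>2 * real n)"
proof (intro exI[of _ 2] conjI allI impI)
  fix x N n :: nat and a :: real
  assume "n \<le> N" "0 \<le> a"
  note expectation = expectation_path_measure_nth[OF \<open>n \<le> N\<close>, where g = "\<lambda>y. exp (a * real y)"]
  show "(\<Sum>y. meander_p N n x y * exp (a * real y))
      = measure_pmf.expectation (path_measure N x) (\<lambda>s. exp (a * real (s ! n)))"
    by (simp add: suminf_meander_p expectation)
  have "killed_expect n (int x) (\<lambda>y. psi y (N - n) * exp (a * real y))
      \<le> psi x N * (2 * exp (a * real x + 2 * a\<^sup>2 * real n))"
    using killed_expect_psi_exp_le[OF \<open>0 \<le> a\<close>, of n x "N - n"] \<open>n \<le> N\<close> by simp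
  then show "measure_pmf.expectation (path_measure N x) (\<lambda>s. exp (a * real (s ! n)))
      \<le> 2 * exp (a * real x + 2 * a\<^sup>2 * real n)"
    using psi_pos[of x N] by (simp add: expectation pos_divide_le_eq mult.commute)
qed simp_all

end
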